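(* Suppose $(a_1,a_1),\dots,(a_\ell,a_\ell)\in R$ are distinct, and that there exist $\bullet_1,\dots,\bullet_\ell\in\{\circ,\ast\}$ such that $a_1\bullet_1a_1,\dots,a_\ell\bullet_\ell a_\ell$ are pairwise distinct. Then $\pi\ge\ell(n-2q-m+1)$. Moreover, such $\bullet_i$ always exist if $n$ is odd or if $\ell=2$.
   Context: $G$ is a set of size $n$ and $G(\circ)$, $G(\ast)$ are distinct groups on $G$ with the same identity element. $\mathrm{diff}(\circ,\ast)=\{(a,b):a\circ b\ne a\ast b\}$, $\mathrm{dist}(\circ,\ast)=|\mathrm{diff}(\circ,\ast)|$, $\mathrm{dist}_a=|\{b:a\circ b\ne a\ast b\}|$; $H=\{a:\mathrm{dist}_a=0\}$, $h=|H|$; $K=\{a:\mathrm{dist}_a<n/3\}$, $k=|K|$; $m=\min\{\mathrm{dist}_a:\mathrm{dist}_a>0\}$. Standing assumption: $m\ge 3$. Let $q=\lceil n/3\rceil$ and the profit $\pi=\mathrm{dist}(\circ,\ast)-((k-h)m+(n-k)q)$. Let $R=\{(a,a)\in\mathrm{diff}(\circ,\ast):a\in K\}$, $r=|R|$. *)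

theory Defs
  imports Complex_Main "HOL-Algebra.Group"
begin

text \<open>Two binary operations f (for circ) and g (for ast) on a finite carrier G.\<close>

definition diffset :: "'a set \<Rightarrow> ('a \<Rightarrow> 'a \<Rightarrow> 'a) \<Rightarrow> ('a \<Rightarrow> 'a \<Rightarrow> 'a) \<Rightarrow> ('a \<times> 'a) set" where
  "diffset G f g = {(a, b). a \<in> G \<and> b \<in> G \<and> f a b \<noteq> g a b}"

definition distA :: "'a set \<Rightarrow> ('a \<Rightarrow> 'a \<Rightarrow> 'a) \<Rightarrow> ('a \<Rightarrow> 'a \<Rightarrow> 'a) \<Rightarrow> 'a \<Rightarrow> nat" where
  "distA G f g a = card {b \<in> G. f a b \<noteq> g a b}"

definition Hset :: "'a set \<Rightarrow> ('a \<Rightarrow> 'a \<Rightarrow> 'a) \<Rightarrow> ('a \<Rightarrow> 'a \<Rightarrow> 'a) \<Rightarrow> 'a set" where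
  "Hset G f g = {a \<in> G. distA G f g a = 0}"

definition Kset :: "'a set \<Rightarrow> ('a \<Rightarrow> 'a \<Rightarrow> 'a) \<Rightarrow> ('a \<Rightarrow> 'a \<Rightarrow> 'a) \<Rightarrow> 'a set" where
  "Kset G f g = {a \<in> G. real (distA G f g a) < real (card G) / 3}"

definition mval :: "'a set \<Rightarrow> ('a \<Rightarrow> 'a \<Rightarrow> 'a) \<Rightarrow> ('a \<Rightarrow> 'a \<Rightarrow> 'a) \<Rightarrow> nat" where
  "mval G f g = Min {distA G f g a | a. a \<in> G \<and> distA G f g a > 0}"

definition qval :: "nat \<Rightarrow> int" where
  "qval n = \<lceil>real n / 3\<rceil>"

definition profit :: "'a set \<Rightarrow> ('a \<Rightarrow> 'a \<Rightarrow> 'a) \<Rightarrow> ('a \<Rightarrow> 'a \<Rightarrow> 'a) \<Rightarrow> int" where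
  "profit G f g = int (card (diffset G f g))
     - ((int (card (Kset G f g)) - int (card (Hset G f g))) * int (mval G f g)
        + (int (card G) - int (card (Kset G f g))) * qval (card G))"

definition Rset :: "'a set \<Rightarrow> ('a \<Rightarrow> 'a \<Rightarrow> 'a) \<Rightarrow> ('a \<Rightarrow> 'a \<Rightarrow> 'a) \<Rightarrow> ('a \<times> 'a) set" where
  "Rset G f g = {(a, a) | a. a \<in> Kset G f g \<and> (a, a) \<in> diffset G f g}"

end

theory Submission
  imports Defs "HOL-Algebra.Multiplicative_Group"
begin

text \<open>
  Write \<open>dist\<close> for \<open>distA\<close>. If \<open>a \<circ> b = a \<ast> b\<close> and \<open>a \<circ> (a \<circ> b) = a \<ast> (a \<circ> b)\<close>, then
  \<open>(a \<circ> a) \<circ> b = (a \<ast> a) \<ast> b\<close>, so cancellation forces both squares \<open>x\<close> of \<open>a\<close> to satisfy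
  \<open>x \<circ> b \<noteq> x \<ast> b\<close> whenever \<open>a \<circ> a \<noteq> a \<ast> a\<close>. At most \<open>2 dist a\<close> elements \<open>b\<close> fail the two
  hypotheses, hence \<open>n \<le> dist x + 2 dist a\<close>. For \<open>a \<in> K\<close> this puts \<open>x\<close> outside \<open>K\<close>.
  The profit is the sum over \<open>G\<close> of the nonnegative terms \<open>dist x - w x\<close>, where the row bound
  \<open>w\<close> is \<open>0\<close>, \<open>m\<close>, \<open>q\<close> on \<open>H\<close>, \<open>K - H\<close>, \<open>G - K\<close>; so each of the \<open>\<ell>\<close> disjoint pairs
  \<open>{a\<^sub>i, a\<^sub>i \<bullet>\<^sub>i a\<^sub>i}\<close> contributes at least \<open>n - 2q - m + 1\<close> to it.
  Squaring is injective in a group of odd order, so then \<open>\<bullet>\<^sub>i = \<circ>\<close> works for all \<open>i\<close>.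
\<close>

lemma (in group) nat_pow_square_odd_order:
  assumes "odd (order G)" "x \<in> carrier G"
  shows "(x \<otimes> x) [^] (Suc (order G) div 2) = x"
proof -
  have "x \<otimes> x = x [^] (2::nat)"
    using assms(2) by (simp add: numeral_2_eq_2)
  then have "(x \<otimes> x) [^] (Suc (order G) div 2) = x [^] (2 * (Suc (order G) div 2))"
    using assms(2) by (simp add: nat_pow_pow)
  also have "\<dots> = x [^] order G \<otimes> x"
    using assms(1) by (simp add: nat_pow_Suc flip: odd_two_times_div_two_succ)
  finally show ?thesis
    using assms(2) by (simp add: pow_order_eq_1)
qed

lemma (in group) square_inj_on_odd_order:
  assumes "odd (order G)"
  shows "inj_on (\<lambda>x. x \<otimes> x) (carrier G)"
  by (rule inj_onI) (metis nat_pow_square_odd_order[OF assms])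

lemma square_disagrees:
  assumes grp_f: "group \<lparr>carrier = G, mult = f, one = e\<rparr>"
    and grp_g: "group \<lparr>carrier = G, mult = g, one = e'\<rparr>"
    and a: "a \<in> G" and b: "b \<in> G" and x: "x \<in> {f a a, g a a}"
    and squares_differ: "f a a \<noteq> g a a"
    and agree: "f a b = g a b" "f a (f a b) = g a (f a b)"
  shows "f x b \<noteq> g x b"
proof -
  interpret F: group "\<lparr>carrier = G, mult = f, one = e\<rparr>" by fact
  interpret Gr: group "\<lparr>carrier = G, mult = g, one = e'\<rparr>" by fact
  have closed: "f a a \<in> G" "g a a \<in> G"
    using F.m_closed Gr.m_closed a by auto
  have "f (f a a) b = g (g a a) b"
    using F.m_assoc[of a a b] Gr.m_assoc[of a a b] a b agree by simp
  then show ?thesis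
    using x squares_differ closed b
      F.right_cancel[of b "g a a" "f a a"] Gr.right_cancel[of b "f a a" "g a a"]
    by auto
qed

lemma card_le_distA_square:
  assumes fin: "finite G"
    and grp_f: "group \<lparr>carrier = G, mult = f, one = e\<rparr>"
    and grp_g: "group \<lparr>carrier = G, mult = g, one = e'\<rparr>"
    and a: "a \<in> G" and x: "x \<in> {f a a, g a a}"
    and squares_differ: "f a a \<noteq> g a a"
  shows "card G \<le> distA G f g x + 2 * distA G f g a"
proof -
  interpret F: group "\<lparr>carrier = G, mult = f, one = e\<rparr>" by fact
  define D where "D = {b \<in> G. f a b \<noteq> g a b}"
  define S where "S = {b \<in> G. f a b \<notin> D \<and> b \<notin> D}"
  have "card (G - S) \<le> card (D \<union> {b \<in> G. f a b \<in> D})"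
    by (rule card_mono) (auto simp: S_def D_def fin)
  also have "\<dots> \<le> card D + card {b \<in> G. f a b \<in> D}"
    by (rule card_Un_le)
  also have "card {b \<in> G. f a b \<in> D} \<le> card D"
    by (rule card_inj_on_le[where f = "f a"])
       (use fin F.inj_on_cmult[of a] a in \<open>auto simp: D_def inj_on_def\<close>)
  finally have "card (G - S) \<le> 2 * distA G f g a"
    by (simp add: distA_def D_def)
  moreover have "card S \<le> distA G f g x"
    unfolding distA_def
    by (rule card_mono)
       (use fin square_disagrees[OF grp_f grp_g a _ x squares_differ]
         F.m_closed a in \<open>auto simp: S_def D_def\<close>)
  moreover have "card G = card S + card (G - S)"
    using fin by (simp add: S_def card_Diff_subset card_mono)
  ultimately show ?thesis by linarith
qed

definition row_bound :: "'a set \<Rightarrow> ('a \<Rightarrow> 'a \<Rightarrow> 'a) \<Rightarrow> ('a \<Rightarrow> 'a \<Rightarrow> 'a) \<Rightarrow> 'a \<Rightarrow> int" where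
  "row_bound G f g x =
     (if x \<in> Hset G f g then 0
      else if x \<in> Kset G f g then int (mval G f g) else qval (card G))"

lemma card_diffset:
  assumes "finite G"
  shows "card (diffset G f g) = (\<Sum>x\<in>G. distA G f g x)"
proof -
  have "diffset G f g = Sigma G (\<lambda>x. {b \<in> G. f x b \<noteq> g x b})"
    by (auto simp: diffset_def)
  then show ?thesis
    using assms by (simp add: distA_def)
qed

lemma Hset_subset_Kset:
  assumes "finite G"
  shows "Hset G f g \<subseteq> Kset G f g"
  using assms by (auto simp: Hset_def Kset_def card_gt_0_iff)

lemma sum_row_bound:
  assumes fin: "finite G"
  shows "(\<Sum>x\<in>G. row_bound G f g x)
    = (int (card (Kset G f g)) - int (card (Hset G f g))) * int (mval G f g)
      + (int (card G) - int (card (Kset G f g))) * qval (card G)"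
proof -
  let ?H = "Hset G f g" and ?K = "Kset G f g" and ?w = "row_bound G f g"
  have KG: "?K \<subseteq> G" by (auto simp: Kset_def)
  have HK: "?H \<subseteq> ?K" using fin by (rule Hset_subset_Kset)
  have finK: "finite ?K" using fin KG by (rule finite_subset[rotated])
  have "(\<Sum>x\<in>G. ?w x) = (\<Sum>x\<in>G - ?K. ?w x) + ((\<Sum>x\<in>?K - ?H. ?w x) + (\<Sum>x\<in>?H. ?w x))"
    by (simp add: sum.subset_diff[OF KG fin] sum.subset_diff[OF HK finK])
  also have "\<dots> = (\<Sum>x\<in>G - ?K. qval (card G)) + (\<Sum>x\<in>?K - ?H. int (mval G f g))"
    using HK by (intro arg_cong2[where f = "(+)"] sum.cong) (auto simp: row_bound_def)
  also have "\<dots> = (int (card ?K) - int (card ?H)) * int (mval G f g)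
      + (int (card G) - int (card ?K)) * qval (card G)"
    using fin finK KG HK
    by (simp add: card_Diff_subset card_mono of_nat_diff finite_subset algebra_simps)
  finally show ?thesis .
qed

lemma profit_eq_sum:
  assumes "finite G"
  shows "profit G f g = (\<Sum>x\<in>G. int (distA G f g x) - row_bound G f g x)"
  using assms by (simp add: profit_def card_diffset sum_row_bound sum_subtractf)

lemma distA_less_qval:
  assumes "x \<in> Kset G f g"
  shows "int (distA G f g x) < qval (card G)"
  using assms by (simp add: Kset_def qval_def less_ceiling_iff)

lemma qval_le_distA:
  assumes "x \<in> G" "x \<notin> Kset G f g"
  shows "qval (card G) \<le> int (distA G f g x)"
  using assms by (simp add: Kset_def qval_def ceiling_le_iff)

lemma distA_pos:
  assumes "finite G" "a \<in> G" "b \<in> G" "f a b \<noteq> g a b"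
  shows "0 < distA G f g a"
  using assms by (auto simp: distA_def card_gt_0_iff)

lemma mval_le_distA:
  assumes "finite G" "x \<in> G" "0 < distA G f g x"
  shows "mval G f g \<le> distA G f g x"
  unfolding mval_def
proof (rule Min_le)
  show "finite {distA G f g a | a. a \<in> G \<and> 0 < distA G f g a}"
    by (rule finite_subset[of _ "distA G f g ` G"]) (use assms(1) in auto)
qed (use assms in auto)

lemma row_bound_le_distA:
  assumes "finite G" "x \<in> G"
  shows "row_bound G f g x \<le> int (distA G f g x)"
  using assms mval_le_distA[of G x f g] qval_le_distA[of x G f g]
  by (auto simp: row_bound_def Hset_def)

lemma square_notin_Kset:
  assumes fin: "finite G"
    and grp_f: "group \<lparr>carrier = G, mult = f, one = e\<rparr>"
    and grp_g: "group \<lparr>carrier = G, mult = g, one = e'\<rparr>"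
    and a: "a \<in> Kset G f g" and x: "x \<in> {f a a, g a a}"
    and squares_differ: "f a a \<noteq> g a a"
  shows "x \<in> G - Kset G f g"
proof -
  interpret F: group "\<lparr>carrier = G, mult = f, one = e\<rparr>" by fact
  interpret Gr: group "\<lparr>carrier = G, mult = g, one = e'\<rparr>" by fact
  have aG: "a \<in> G" using a by (simp add: Kset_def)
  have "card G \<le> distA G f g x + 2 * distA G f g a"
    using card_le_distA_square[OF fin grp_f grp_g aG x squares_differ] .
  moreover have "3 * distA G f g a < card G"
    using a by (simp add: Kset_def)
  ultimately have "x \<notin> Kset G f g"
    by (auto simp: Kset_def)
  moreover have "x \<in> G"
    using x aG F.m_closed Gr.m_closed by auto
  ultimately show ?thesis by simp
qed

lemma square_pair_profit_ge:
  assumes fin: "finite G"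
    and grp_f: "group \<lparr>carrier = G, mult = f, one = e\<rparr>"
    and grp_g: "group \<lparr>carrier = G, mult = g, one = e'\<rparr>"
    and a: "a \<in> Kset G f g" and x: "x \<in> {f a a, g a a}"
    and squares_differ: "f a a \<noteq> g a a"
  shows "int (card G) - 2 * qval (card G) - int (mval G f g) + 1
    \<le> (int (distA G f g a) - row_bound G f g a) + (int (distA G f g x) - row_bound G f g x)"
proof -
  have aG: "a \<in> G" using a by (simp add: Kset_def)
  have x_out: "x \<in> G - Kset G f g"
    using square_notin_Kset[OF fin grp_f grp_g a x squares_differ] .
  have "a \<notin> Hset G f g"
    using distA_pos[of G a a f g] fin aG squares_differ by (simp add: Hset_def)
  then have "row_bound G f g a = int (mval G f g)"
    using a by (simp add: row_bound_def)
  moreover have "row_bound G f g x = qval (card G)"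
    using x_out Hset_subset_Kset[OF fin, of f g] by (auto simp: row_bound_def)
  moreover have "card G \<le> distA G f g x + 2 * distA G f g a"
    using card_le_distA_square[OF fin grp_f grp_g aG x squares_differ] .
  ultimately show ?thesis
    using distA_less_qval[OF a] by linarith
qed

lemma sum_ge_disjoint_pairs:
  fixes t :: "'a \<Rightarrow> 'b :: linordered_idom"
  assumes "finite A" "inj_on u I" "inj_on v I"
    and "u ` I \<inter> v ` I = {}" "u ` I \<union> v ` I \<subseteq> A"
    and "\<And>x. x \<in> A \<Longrightarrow> 0 \<le> t x"
    and "\<And>i. i \<in> I \<Longrightarrow> B \<le> t (u i) + t (v i)"
  shows "of_nat (card I) * B \<le> (\<Sum>x\<in>A. t x)"
proof -
  have fin_u: "finite (u ` I)" and fin_v: "finite (v ` I)"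
    using assms(1,5) finite_subset by auto
  have "of_nat (card I) * B = (\<Sum>i\<in>I. B)" by simp
  also have "\<dots> \<le> (\<Sum>i\<in>I. t (u i) + t (v i))"
    using assms(7) by (rule sum_mono)
  also have "\<dots> = (\<Sum>x\<in>u ` I \<union> v ` I. t x)"
    using assms(2-4) fin_u fin_v by (simp add: sum.distrib sum.reindex sum.union_disjoint)
  also have "\<dots> \<le> (\<Sum>x\<in>A. t x)"
    using assms(1,5,6) by (intro sum_mono2) auto
  finally show ?thesis .
qed

lemma Rset_diagonalD:
  assumes "(x, x) \<in> Rset G f g"
  shows "x \<in> Kset G f g" "x \<in> G" "f x x \<noteq> g x x"
  using assms by (auto simp: Rset_def diffset_def Kset_def)

lemma profit_ge_if_inj_squares:
  assumes fin: "finite G"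
    and grp_f: "group \<lparr>carrier = G, mult = f, one = e\<rparr>"
    and grp_g: "group \<lparr>carrier = G, mult = g, one = e'\<rparr>"
    and inR: "\<forall>i<l. (a i, a i) \<in> Rset G f g"
    and inj_a: "inj_on a {..<l}"
    and inj_sq: "inj_on (\<lambda>i. (if c i then f else g) (a i) (a i)) {..<l}"
  shows "int l * (int (card G) - 2 * qval (card G) - int (mval G f g) + 1) \<le> profit G f g"
proof -
  let ?sq = "\<lambda>i. (if c i then f else g) (a i) (a i)"
  note aK = Rset_diagonalD(1)[OF inR[rule_format]]
    and aG = Rset_diagonalD(2)[OF inR[rule_format]]
    and squares_differ = Rset_diagonalD(3)[OF inR[rule_format]]
  have sq_out: "?sq i \<in> G - Kset G f g" if "i < l" for i
    using square_notin_Kset[OF fin grp_f grp_g aK[OF that] _ squares_differ[OF that]] by simp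
  have "of_nat (card {..<l}) * (int (card G) - 2 * qval (card G) - int (mval G f g) + 1)
      \<le> (\<Sum>x\<in>G. int (distA G f g x) - row_bound G f g x)"
  proof (rule sum_ge_disjoint_pairs[OF fin inj_a inj_sq])
    have "a i \<noteq> ?sq j" if "i < l" "j < l" for i j
      using aK[OF that(1)] sq_out[OF that(2)] by auto
    then show "a ` {..<l} \<inter> ?sq ` {..<l} = {}" by auto
    show "a ` {..<l} \<union> ?sq ` {..<l} \<subseteq> G"
      using aG sq_out by auto
    show "0 \<le> int (distA G f g x) - row_bound G f g x" if "x \<in> G" for x
      using row_bound_le_distA[OF fin that] by simp
    show "int (card G) - 2 * qval (card G) - int (mval G f g) + 1
        \<le> (int (distA G f g (a i)) - row_bound G f g (a i))
          + (int (distA G f g (?sq i)) - row_bound G f g (?sq i))" if "i \<in> {..<l}" for i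
      using that square_pair_profit_ge[OF fin grp_f grp_g aK _ squares_differ] by simp
  qed
  then show ?thesis
    using fin by (simp add: profit_eq_sum)
qed

lemma exists_inj_squares:
  fixes l :: nat and a :: "nat \<Rightarrow> 'a"
  assumes grp_f: "group \<lparr>carrier = G, mult = f, one = e\<rparr>"
    and inR: "\<forall>i<l. (a i, a i) \<in> Rset G f g"
    and inj_a: "inj_on a {..<l}"
    and odd_or_two: "odd (card G) \<or> l = 2"
  shows "\<exists>c. inj_on (\<lambda>i. (if c i then f else g) (a i) (a i)) {..<l}"
  using odd_or_two
proof
  assume "odd (card G)"
  then have "inj_on (\<lambda>x. f x x) G"
    using group.square_inj_on_odd_order[OF grp_f] by (simp add: order_def)
  moreover have "a ` {..<l} \<subseteq> G"
    using Rset_diagonalD(2)[OF inR[rule_format]] by auto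
  ultimately have "inj_on (\<lambda>x. f x x) (a ` {..<l})"
    by (rule inj_on_subset)
  then have "inj_on ((\<lambda>x. f x x) \<circ> a) {..<l}"
    by (rule comp_inj_on[OF inj_a])
  then show ?thesis
    by (intro exI[of _ "\<lambda>_. True"]) (simp add: comp_def)
next
  assume l: "l = 2"
  \<comment> \<open>Use \<open>\<ast>\<close> for \<open>a\<^sub>1\<close> exactly when the two \<open>\<circ>\<close>-squares coincide.\<close>
  let ?c = "\<lambda>i::nat. i = 0 \<or> f (a 0) (a 0) \<noteq> f (a 1) (a 1)"
  have "f (a 1) (a 1) \<noteq> g (a 1) (a 1)"
    using Rset_diagonalD(3)[OF inR[rule_format, of 1]] l by simp
  then have "inj_on (\<lambda>i. (if ?c i then f else g) (a i) (a i)) {0, 1}"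
    by auto
  moreover have "{..<l} = {0, 1}"
    using l by auto
  ultimately show ?thesis
    by (intro exI[of _ ?c]) simp
qed

theorem lemma9p1:
  fixes G :: "'a set" and f g :: "'a \<Rightarrow> 'a \<Rightarrow> 'a" and e :: 'a
    and l :: nat and a :: "nat \<Rightarrow> 'a"
  assumes fin: "finite G"
    and grp_f: "group \<lparr>carrier = G, mult = f, one = e\<rparr>"
    and grp_g: "group \<lparr>carrier = G, mult = g, one = e\<rparr>"
    and distinct_ops: "\<exists>x\<in>G. \<exists>y\<in>G. f x y \<noteq> g x y"
    and m_ge: "mval G f g \<ge> 3"
    and inR: "\<forall>i<l. (a i, a i) \<in> Rset G f g"
    and distinct_a: "inj_on a {..<l}"
  shows "((\<exists>c :: nat \<Rightarrow> bool.
             inj_on (\<lambda>i. (if c i then f else g) (a i) (a i)) {..<l})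
          \<longrightarrow> profit G f g \<ge> int l * (int (card G) - 2 * qval (card G) - int (mval G f g) + 1))
       \<and> ((odd (card G) \<or> l = 2) \<longrightarrow>
          (\<exists>c :: nat \<Rightarrow> bool.
             inj_on (\<lambda>i. (if c i then f else g) (a i) (a i)) {..<l}))"
proof (intro conjI impI)
  show "int l * (int (card G) - 2 * qval (card G) - int (mval G f g) + 1) \<le> profit G f g"
    if "\<exists>c. inj_on (\<lambda>i. (if c i then f else g) (a i) (a i)) {..<l}"
    using that profit_ge_if_inj_squares[OF fin grp_f grp_g inR distinct_a] by blast
  show "\<exists>c. inj_on (\<lambda>i. (if c i then f else g) (a i) (a i)) {..<l}"
    if "odd (card G) \<or> l = 2"
    using exists_inj_squares[OF grp_f inR distinct_a that] .
qed

end
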